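(* Let $G$ be a finite simple connected graph with minimum degree $\delta(G)\geq 3$. If $Z(G)=3$, then the edge connectivity of $G$ satisfies $\kappa'(G)\geq 3$.
   Context: Zero forcing: color each vertex of $G$ black or white. Color-change rule: if a black vertex $u$ has exactly one white neighbor $v$, then $v$ is recolored black ($u$ "forces" $v$). A set $Z\subseteq V(G)$ is a zero forcing set if, starting with exactly the vertices of $Z$ black and applying the color-change rule repeatedly until no more changes are possible, all vertices become black. The zero forcing number $Z(G)$ is the minimum size of a zero forcing set. $\kappa'(G)$ denotes the edge connectivity of $G$ (the minimum number of edges whose deletion disconnects $G$). *)

theory Defs
  imports Main
begin

definition simple_graph :: "'a set \<Rightarrow> 'a set set \<Rightarrow> bool" where
  "simple_graph V E \<longleftrightarrow> finite V \<and>
     (\<forall>e\<in>E. \<exists>u v. u \<noteq> v \<and> u \<in> V \<and> v \<in> V \<and> e = {u, v})"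

definition nbrs :: "'a set set \<Rightarrow> 'a \<Rightarrow> 'a set" where
  "nbrs E v = {u. {u, v} \<in> E}"

definition degree :: "'a set set \<Rightarrow> 'a \<Rightarrow> nat" where
  "degree E v = card (nbrs E v)"

definition adj_rel :: "'a set set \<Rightarrow> ('a \<times> 'a) set" where
  "adj_rel E = {(x, y). {x, y} \<in> E}"

definition graph_connected :: "'a set \<Rightarrow> 'a set set \<Rightarrow> bool" where
  "graph_connected V E \<longleftrightarrow> (\<forall>u\<in>V. \<forall>v\<in>V. (u, v) \<in> (adj_rel E)\<^sup>*)"

definition edge_connectivity :: "'a set \<Rightarrow> 'a set set \<Rightarrow> nat" where
  "edge_connectivity V E =
     (LEAST k. \<exists>F. F \<subseteq> E \<and> card F = k \<and> \<not> graph_connected V (E - F))"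

text \<open>Set of vertices that end up black when starting with the black set Z and
  repeatedly applying the colour-change rule: a black vertex u whose only white
  neighbour is v forces v.\<close>
inductive_set zf_closure :: "'a set set \<Rightarrow> 'a set \<Rightarrow> 'a set" for E Z where
  init: "z \<in> Z \<Longrightarrow> z \<in> zf_closure E Z"
| force: "\<lbrakk> u \<in> zf_closure E Z; v \<in> nbrs E u;
            \<forall>w\<in>nbrs E u. w \<noteq> v \<longrightarrow> w \<in> zf_closure E Z \<rbrakk>
          \<Longrightarrow> v \<in> zf_closure E Z"

definition zero_forcing_set :: "'a set \<Rightarrow> 'a set set \<Rightarrow> 'a set \<Rightarrow> bool" where
  "zero_forcing_set V E Z \<longleftrightarrow> Z \<subseteq> V \<and> V \<subseteq> zf_closure E Z"

definition zero_forcing_number :: "'a set \<Rightarrow> 'a set set \<Rightarrow> nat" where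
  "zero_forcing_number V E = (LEAST k. \<exists>Z. zero_forcing_set V E Z \<and> card Z = k)"

end

theory Submission
  imports Defs
begin

text \<open>Let \<open>F\<close> be an edge cut with at most two edges and \<open>Z\<close> a zero forcing set of size three.
  Since every degree is at least \<open>3 = |Z|\<close>, the first force \<open>u \<rightarrow> v\<close> shows that \<open>u\<close> is adjacent to
  the other two vertices of \<open>Z\<close>. Let \<open>T\<close> be a side of the cut not containing \<open>u\<close> and let \<open>\<partial>T\<close> be
  the vertices of \<open>T\<close> incident with cut edges. Then every vertex of \<open>Z\<close> lies in
  \<open>B = (V - T) \<union> \<partial>T\<close>, so \<open>B\<close> is zero forcing too. The number of black vertices having a white
  neighbour never grows while forcing, and the last vertex to turn black has only such
  neighbours; starting from \<open>B\<close> there are at most \<open>|\<partial>T| \<le> |F| \<le> 2\<close> of them, which contradicts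
  the minimum degree. (If \<open>B = V\<close>, the degree of any vertex of \<open>T\<close> is already bounded by the
  number of cut edges.)\<close>

lemma simple_graph_nbrs_subset:
  assumes "simple_graph V E"
  shows "nbrs E v \<subseteq> V"
  using assms by (fastforce simp: simple_graph_def nbrs_def doubleton_eq_iff)

lemma simple_graph_not_in_nbrs:
  assumes "simple_graph V E"
  shows "v \<notin> nbrs E v"
  using assms by (fastforce simp: simple_graph_def nbrs_def doubleton_eq_iff)

lemma simple_graph_finite_nbrs:
  assumes "simple_graph V E"
  shows "finite (nbrs E v)"
  using finite_subset[OF simple_graph_nbrs_subset[OF assms]] assms
  by (simp add: simple_graph_def)

lemma simple_graph_finite_edges:
  assumes "simple_graph V E"
  shows "finite E"
proof (rule finite_subset)
  show "E \<subseteq> Pow V" using assms by (auto simp: simple_graph_def)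
  show "finite (Pow V)" using assms by (simp add: simple_graph_def)
qed

lemma mem_nbrs_commute: "u \<in> nbrs E v \<longleftrightarrow> v \<in> nbrs E u"
  by (simp add: nbrs_def insert_commute)

lemma zf_closure_mono:
  assumes "B \<subseteq> B'"
  shows "zf_closure E B \<subseteq> zf_closure E B'"
proof
  fix x assume "x \<in> zf_closure E B"
  then show "x \<in> zf_closure E B'"
    by induction (use assms in \<open>auto intro: zf_closure.init zf_closure.force\<close>)
qed

lemma zf_closure_subset:
  assumes "\<forall>u\<in>B. \<forall>v\<in>nbrs E u. v \<notin> B \<longrightarrow> (\<exists>w\<in>nbrs E u. w \<noteq> v \<and> w \<notin> B)"
  shows "zf_closure E B \<subseteq> B"
proof
  fix x assume "x \<in> zf_closure E B"
  then show "x \<in> B"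
    by induction (use assms in blast)+
qed

lemma exists_force:
  assumes "V \<subseteq> zf_closure E B" "\<not> V \<subseteq> B"
  obtains u v where "u \<in> B" "v \<in> nbrs E u" "v \<notin> B" "\<forall>w\<in>nbrs E u. w \<noteq> v \<longrightarrow> w \<in> B"
  using zf_closure_subset[of B E] assms by blast

lemma zero_forcing_number_witness:
  assumes "finite V"
  obtains Z where "zero_forcing_set V E Z" "card Z = zero_forcing_number V E"
proof -
  have "zero_forcing_set V E V"
    by (auto simp: zero_forcing_set_def intro: zf_closure.init)
  then show ?thesis
    using that LeastI[of "\<lambda>k. \<exists>Z. zero_forcing_set V E Z \<and> card Z = k" "card V"]
    unfolding zero_forcing_number_def by blast
qed

lemma not_subset_if_card_le_degree:
  assumes sg: "simple_graph V E" and "Z \<subseteq> V" "x \<in> V" "card Z \<le> degree E x"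
  shows "\<not> V \<subseteq> Z"
proof
  assume "V \<subseteq> Z"
  have "finite Z" using assms(2) sg finite_subset by (auto simp: simple_graph_def)
  have "nbrs E x \<subseteq> Z - {x}"
    using simple_graph_nbrs_subset[OF sg] simple_graph_not_in_nbrs[OF sg] \<open>V \<subseteq> Z\<close> by blast
  then have "degree E x \<le> card Z - 1"
    using \<open>finite Z\<close> card_mono[of "Z - {x}"] \<open>V \<subseteq> Z\<close> \<open>x \<in> V\<close>
    by (simp add: degree_def card_Diff_singleton subset_iff)
  moreover have "card Z > 0" using \<open>finite Z\<close> \<open>V \<subseteq> Z\<close> \<open>x \<in> V\<close> card_gt_0_iff by blast
  ultimately show False using assms(4) by linarith
qed

text \<open>The neighbours of the vertex \<open>u\<close> performing the first force \<open>u \<rightarrow> v\<close> lie in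
  \<open>insert v (Z - {u})\<close>; the degree bound forces equality.\<close>

lemma first_forcer_adjacent:
  assumes sg: "simple_graph V E" and Z: "zero_forcing_set V E Z" and "\<not> V \<subseteq> Z"
    and deg: "\<forall>v\<in>V. card Z \<le> degree E v"
  obtains u where "u \<in> Z" "Z - {u} \<subseteq> nbrs E u"
proof -
  have "Z \<subseteq> V" "V \<subseteq> zf_closure E Z" using Z by (auto simp: zero_forcing_set_def)
  then obtain u v where u: "u \<in> Z" "v \<in> nbrs E u" "v \<notin> Z" "\<forall>w\<in>nbrs E u. w \<noteq> v \<longrightarrow> w \<in> Z"
    using exists_force \<open>\<not> V \<subseteq> Z\<close> by metis
  have "finite Z" using \<open>Z \<subseteq> V\<close> sg finite_subset by (auto simp: simple_graph_def)
  have sub: "nbrs E u \<subseteq> insert v (Z - {u})"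
    using u simple_graph_not_in_nbrs[OF sg, of u] by blast
  have "card (insert v (Z - {u})) = Suc (card (Z - {u}))"
    using u \<open>finite Z\<close> by simp
  also have "\<dots> = card Z"
    using \<open>finite Z\<close> u(1) by (rule card_Suc_Diff1)
  also have "\<dots> \<le> card (nbrs E u)"
    using deg u(1) \<open>Z \<subseteq> V\<close> by (auto simp: degree_def)
  finally have "nbrs E u = insert v (Z - {u})"
    using card_seteq[OF _ sub] \<open>finite Z\<close> by blast
  then show ?thesis using that u(1) by blast
qed

definition active :: "'a set set \<Rightarrow> 'a set \<Rightarrow> 'a set" where
  "active E B = {b\<in>B. \<exists>w\<in>nbrs E b. w \<notin> B}"

text \<open>The forcing vertex \<open>u\<close> stops being active; at most the forced vertex \<open>v\<close> becomes active.\<close>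

lemma card_active_force_le:
  assumes "finite (active E B)" and u: "u \<in> B" "v \<in> nbrs E u" "v \<notin> B"
    "\<forall>w\<in>nbrs E u. w \<noteq> v \<longrightarrow> w \<in> B"
  shows "card (active E (insert v B)) \<le> card (active E B)"
proof -
  have "u \<in> active E B" using u by (auto simp: active_def)
  have "active E (insert v B) \<subseteq> insert v (active E B - {u})"
    using u by (auto simp: active_def)
  then have "card (active E (insert v B)) \<le> card (insert v (active E B - {u}))"
    using assms(1) by (simp add: card_mono)
  also have "\<dots> \<le> Suc (card (active E B - {u}))"
    using assms(1) by (simp add: card_insert_if)
  also have "\<dots> = card (active E B)"
    using assms(1) \<open>u \<in> active E B\<close> by (rule card_Suc_Diff1)
  finally show ?thesis .
qed

text \<open>All neighbours of the last vertex to be forced are active at that moment.\<close>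

lemma exists_white_degree_le_card_active:
  assumes sg: "simple_graph V E"
  shows "B \<subseteq> V \<Longrightarrow> V \<subseteq> zf_closure E B \<Longrightarrow> \<not> V \<subseteq> B \<Longrightarrow>
    \<exists>q\<in>V - B. degree E q \<le> card (active E B)"
proof (induction "card (V - B)" arbitrary: B rule: less_induct)
  case less
  have "finite V" using sg by (simp add: simple_graph_def)
  obtain u v where u: "u \<in> B" "v \<in> nbrs E u" "v \<notin> B" "\<forall>w\<in>nbrs E u. w \<noteq> v \<longrightarrow> w \<in> B"
    using exists_force less.prems(2,3) by metis
  have "v \<in> V" using simple_graph_nbrs_subset[OF sg] u(2) by blast
  have fin: "finite (active E B)"
    using less.prems(1) \<open>finite V\<close> finite_subset[of "active E B" V] by (auto simp: active_def)
  show ?case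
  proof (cases "V \<subseteq> insert v B")
    case True
    have "nbrs E v \<subseteq> active E B"
      using True u(3) simple_graph_nbrs_subset[OF sg, of v] simple_graph_not_in_nbrs[OF sg, of v]
      by (auto simp: active_def mem_nbrs_commute)
    then have "degree E v \<le> card (active E B)"
      unfolding degree_def using fin card_mono by blast
    then show ?thesis using \<open>v \<in> V\<close> u(3) by blast
  next
    case False
    have "card (V - insert v B) < card (V - B)"
      using \<open>v \<in> V\<close> u(3) \<open>finite V\<close> by (metis Diff_insert card_Diff1_less finite_Diff Diff_iff)
    moreover have "V \<subseteq> zf_closure E (insert v B)"
      using less.prems(2) zf_closure_mono[of B "insert v B" E] by blast
    ultimately obtain q where "q \<in> V - insert v B" "degree E q \<le> card (active E (insert v B))"
      using less.hyps[of "insert v B"] False \<open>v \<in> V\<close> less.prems(1) by blast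
    then show ?thesis using card_active_force_le[OF fin u] by force
  qed
qed

lemma disconnected_cut_side:
  assumes sg: "simple_graph V E" and "\<not> graph_connected V (E - F)"
  obtains T where "T \<subseteq> V" "T \<noteq> {}" "u \<notin> T" "\<forall>t\<in>T. \<forall>s\<in>nbrs E t - T. {s, t} \<in> F"
proof -
  define R where "R = (adj_rel (E - F))\<^sup>*"
  obtain x y where xy: "x \<in> V" "y \<in> V" "(x, y) \<notin> R"
    using assms(2) by (auto simp: graph_connected_def R_def)
  define C where "C = {w \<in> V. (x, w) \<in> R}"
  have C_closed: "s \<in> C \<longleftrightarrow> t \<in> C" if "t \<in> V" "s \<in> nbrs E t" "{s, t} \<notin> F" for s t
  proof -
    have "s \<in> V" using simple_graph_nbrs_subset[OF sg] that(2) by blast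
    have "(s, t) \<in> adj_rel (E - F)" "(t, s) \<in> adj_rel (E - F)"
      using that by (auto simp: adj_rel_def nbrs_def insert_commute)
    then show ?thesis
      using \<open>s \<in> V\<close> that(1) rtrancl_into_rtrancl[of x _ "adj_rel (E - F)"]
      by (auto simp: C_def R_def)
  qed
  have "x \<in> C" "y \<notin> C" using xy by (auto simp: C_def R_def)
  show ?thesis
  proof (cases "u \<in> C")
    case True
    show ?thesis
      by (rule that[of "V - C"])
        (use True \<open>y \<notin> C\<close> xy C_closed simple_graph_nbrs_subset[OF sg] in auto)
  next
    case False
    show ?thesis
      by (rule that[of C]) (use False \<open>x \<in> C\<close> C_closed in \<open>auto simp: C_def\<close>)
  qed
qed

lemma edge_connectivity_witness:
  assumes "x \<in> V" "y \<in> V" "x \<noteq> y"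
  obtains F where "F \<subseteq> E" "card F = edge_connectivity V E" "\<not> graph_connected V (E - F)"
proof -
  have "\<not> graph_connected V (E - E)"
    using assms by (auto simp: graph_connected_def adj_rel_def)
  then show ?thesis
    using that LeastI[of "\<lambda>k. \<exists>F. F \<subseteq> E \<and> card F = k \<and> \<not> graph_connected V (E - F)" "card E"]
    unfolding edge_connectivity_def by blast
qed

definition cut_pairs :: "'a set set \<Rightarrow> 'a set \<Rightarrow> ('a \<times> 'a) set" where
  "cut_pairs E T = (SIGMA t:T. nbrs E t - T)"

definition boundary :: "'a set set \<Rightarrow> 'a set \<Rightarrow> 'a set" where
  "boundary E T = {t\<in>T. nbrs E t - T \<noteq> {}}"

lemma finite_cut_pairs:
  assumes "simple_graph V E" "T \<subseteq> V"
  shows "finite (cut_pairs E T)"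
  unfolding cut_pairs_def
proof (rule finite_SigmaI)
  show "finite T" using assms finite_subset by (auto simp: simple_graph_def)
qed (simp add: simple_graph_finite_nbrs[OF assms(1)])

lemma card_cut_pairs_le:
  assumes "\<forall>t\<in>T. \<forall>s\<in>nbrs E t - T. {s, t} \<in> F" "finite F"
  shows "card (cut_pairs E T) \<le> card F"
proof (rule card_inj_on_le)
  show "inj_on (\<lambda>(t, s). {s, t}) (cut_pairs E T)"
    by (auto simp: inj_on_def cut_pairs_def doubleton_eq_iff)
  show "(\<lambda>(t, s). {s, t}) ` cut_pairs E T \<subseteq> F"
    using assms(1) by (auto simp: cut_pairs_def)
qed (rule assms(2))

lemma card_boundary_le_card_cut_pairs:
  assumes "finite (cut_pairs E T)"
  shows "card (boundary E T) \<le> card (cut_pairs E T)"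
proof -
  have "boundary E T \<subseteq> fst ` cut_pairs E T"
    by (force simp: boundary_def cut_pairs_def)
  then show ?thesis
    using assms card_image_le card_mono finite_imageI le_trans by metis
qed

text \<open>If every vertex of \<open>T\<close> lies on the boundary, then \<open>t\<^sub>0\<close> has at least \<open>deg t\<^sub>0 - (|T| - 1)\<close> cut
  edges and each of the other \<open>|T| - 1\<close> vertices at least one.\<close>

lemma degree_le_card_cut_pairs:
  assumes sg: "simple_graph V E" and "T \<subseteq> V" "t\<^sub>0 \<in> T" "T \<subseteq> boundary E T"
  shows "degree E t\<^sub>0 \<le> card (cut_pairs E T)"
proof -
  let ?out = "\<lambda>t. nbrs E t - T"
  have "finite T" using assms(2) sg finite_subset by (auto simp: simple_graph_def)
  have fin_out: "finite (?out t)" for t using simple_graph_finite_nbrs[OF sg] by simp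
  have others: "card (T - {t\<^sub>0}) \<le> (\<Sum>t\<in>T - {t\<^sub>0}. card (?out t))"
  proof -
    have "card (T - {t\<^sub>0}) = (\<Sum>t\<in>T - {t\<^sub>0}. 1)" by simp
    also have "\<dots> \<le> (\<Sum>t\<in>T - {t\<^sub>0}. card (?out t))"
      by (rule sum_mono)
        (use assms(4) fin_out in \<open>auto simp: boundary_def Suc_le_eq card_gt_0_iff\<close>)
    finally show ?thesis .
  qed
  have "nbrs E t\<^sub>0 \<subseteq> (T - {t\<^sub>0}) \<union> ?out t\<^sub>0"
    using simple_graph_not_in_nbrs[OF sg, of t\<^sub>0] by blast
  then have "degree E t\<^sub>0 \<le> card ((T - {t\<^sub>0}) \<union> ?out t\<^sub>0)"
    unfolding degree_def using \<open>finite T\<close> fin_out by (simp add: card_mono)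
  also have "\<dots> \<le> card (T - {t\<^sub>0}) + card (?out t\<^sub>0)"
    by (rule card_Un_le)
  also have "\<dots> \<le> (\<Sum>t\<in>T - {t\<^sub>0}. card (?out t)) + card (?out t\<^sub>0)"
    using others by simp
  also have "\<dots> = (\<Sum>t\<in>T. card (?out t))"
    using sum.remove[OF \<open>finite T\<close> assms(3), of "\<lambda>t. card (?out t)"] by linarith
  also have "\<dots> = card (cut_pairs E T)"
    unfolding cut_pairs_def using \<open>finite T\<close> fin_out by (simp add: card_SigmaI)
  finally show ?thesis .
qed

text \<open>Blackening the far side \<open>V - T\<close> and the boundary of \<open>T\<close> keeps \<open>Z\<close> black,
  and only boundary vertices can then be active.\<close>

lemma min_degree_le_card_cut:
  assumes sg: "simple_graph V E" and deg: "\<forall>v\<in>V. \<delta> \<le> degree E v"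
    and Z: "zero_forcing_set V E Z" and u: "u \<in> Z" "Z - {u} \<subseteq> nbrs E u"
    and T: "T \<subseteq> V" "T \<noteq> {}" "u \<notin> T" and cut: "\<forall>t\<in>T. \<forall>s\<in>nbrs E t - T. {s, t} \<in> F"
    and "finite F"
  shows "\<delta> \<le> card F"
proof -
  have fin: "finite (cut_pairs E T)" using finite_cut_pairs[OF sg T(1)] .
  have cut_le: "card (cut_pairs E T) \<le> card F" using card_cut_pairs_le[OF cut \<open>finite F\<close>] .
  show ?thesis
  proof (cases "T \<subseteq> boundary E T")
    case True
    obtain t\<^sub>0 where "t\<^sub>0 \<in> T" using T(2) by blast
    then show ?thesis
      using deg T(1) degree_le_card_cut_pairs[OF sg T(1) _ True] cut_le by force
  next
    case False
    define B where "B = (V - T) \<union> boundary E T"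
    have "B \<subseteq> V" "\<not> V \<subseteq> B" using T(1) False by (auto simp: B_def boundary_def)
    have "Z \<subseteq> B"
    proof
      fix z assume "z \<in> Z"
      show "z \<in> B"
      proof (cases "z \<in> T")
        case True
        then have "u \<in> nbrs E z - T"
          using \<open>z \<in> Z\<close> u T(3) mem_nbrs_commute by fastforce
        then show ?thesis using True by (auto simp: B_def boundary_def)
      qed (use Z \<open>z \<in> Z\<close> in \<open>auto simp: B_def zero_forcing_set_def\<close>)
    qed
    then have "V \<subseteq> zf_closure E B"
      using Z zf_closure_mono by (fastforce simp: zero_forcing_set_def)
    then obtain q where q: "q \<in> V - B" "degree E q \<le> card (active E B)"
      using exists_white_degree_le_card_active[OF sg \<open>B \<subseteq> V\<close> _ \<open>\<not> V \<subseteq> B\<close>] by blast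
    have "active E B \<subseteq> boundary E T"
      using simple_graph_nbrs_subset[OF sg]
      by (fastforce simp: active_def B_def boundary_def mem_nbrs_commute)
    moreover have "finite (boundary E T)"
      using T(1) sg finite_subset[of "boundary E T" V] by (auto simp: simple_graph_def boundary_def)
    ultimately have "card (active E B) \<le> card (boundary E T)"
      by (simp add: card_mono)
    then show ?thesis
      using q deg card_boundary_le_card_cut_pairs[OF fin] cut_le by force
  qed
qed

theorem mainTheorem1:
  fixes V :: "'a set" and E :: "'a set set"
  assumes "simple_graph V E"
    and "graph_connected V E"
    and "\<forall>v\<in>V. degree E v \<ge> 3"
    and "zero_forcing_number V E = 3"
  shows "edge_connectivity V E \<ge> 3"
proof -
  note sg = assms(1)
  obtain Z where Z: "zero_forcing_set V E Z" "card Z = 3"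
    using zero_forcing_number_witness[of V E] sg assms(4) by (auto simp: simple_graph_def)
  have "Z \<subseteq> V" using Z(1) by (simp add: zero_forcing_set_def)
  have deg: "\<forall>v\<in>V. card Z \<le> degree E v" using assms(3) Z(2) by simp
  have "Z \<noteq> {}" using Z(2) by auto
  then obtain x where "x \<in> V" using \<open>Z \<subseteq> V\<close> by blast
  then have "\<not> V \<subseteq> Z"
    using not_subset_if_card_le_degree[OF sg \<open>Z \<subseteq> V\<close>] deg by blast
  then obtain u where u: "u \<in> Z" "Z - {u} \<subseteq> nbrs E u"
    using first_forcer_adjacent[OF sg Z(1) _ deg] by blast
  have "card (Z - {u}) = 2" using Z(2) u(1) by (simp add: card_Diff_singleton_if)
  then have "Z - {u} \<noteq> {}" by (metis card.empty zero_neq_numeral)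
  then obtain y where "y \<in> Z - {u}" by blast
  then obtain F where F: "F \<subseteq> E" "card F = edge_connectivity V E" "\<not> graph_connected V (E - F)"
    using edge_connectivity_witness[of u V y E] u(1) \<open>Z \<subseteq> V\<close> by blast
  obtain T where "T \<subseteq> V" "T \<noteq> {}" "u \<notin> T" "\<forall>t\<in>T. \<forall>s\<in>nbrs E t - T. {s, t} \<in> F"
    using disconnected_cut_side[OF sg F(3)] by blast
  then have "3 \<le> card F"
    using min_degree_le_card_cut[OF sg assms(3) Z(1) u] F(1)
      finite_subset[OF F(1) simple_graph_finite_edges[OF sg]] by blast
  then show ?thesis using F(2) by simp
qed

end
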